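(* Let $(Q,\circ)$ be a group with identity $e$, and let $(Q,\star)$ be a right modular, unipotent magma with a left unit $\hat{e}$. If $(Q,\circ)$ and $(Q,\star)$ are double magma partners, i.e. $(x\circ y)\star(z\circ w)=(x\star z)\circ(y\star w)$ for all $x,y,z,w\in Q$, then $(Q,\circ)$ is abelian and $x\star y=x^{-1}\circ y$ for all $x,y\in Q$.
   Context: A magma $(Q,\star)$ is right modular if $(x\star y)\star z=(z\star y)\star x$ for all $x,y,z$; unipotent if $x\star x=y\star y$ for all $x,y$; $\hat{e}$ is a left unit if $\hat{e}\star x=x$ for all $x$. *)

theory Defs
  imports "HOL-Algebra.Group"
begin

definition right_modular :: "'a set \<Rightarrow> ('a \<Rightarrow> 'a \<Rightarrow> 'a) \<Rightarrow> bool" where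
  "right_modular Q s \<longleftrightarrow> (\<forall>x\<in>Q. \<forall>y\<in>Q. \<forall>z\<in>Q. s (s x y) z = s (s z y) x)"

definition unipotent :: "'a set \<Rightarrow> ('a \<Rightarrow> 'a \<Rightarrow> 'a) \<Rightarrow> bool" where
  "unipotent Q s \<longleftrightarrow> (\<forall>x\<in>Q. \<forall>y\<in>Q. s x x = s y y)"

definition is_left_unit :: "'a set \<Rightarrow> ('a \<Rightarrow> 'a \<Rightarrow> 'a) \<Rightarrow> 'a \<Rightarrow> bool" where
  "is_left_unit Q s u \<longleftrightarrow> u \<in> Q \<and> (\<forall>x\<in>Q. s u x = x)"

definition double_magma_partners :: "('a, 'b) monoid_scheme \<Rightarrow> ('a \<Rightarrow> 'a \<Rightarrow> 'a) \<Rightarrow> bool" where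
  "double_magma_partners G s \<longleftrightarrow>
     (\<forall>x\<in>carrier G. \<forall>y\<in>carrier G. \<forall>z\<in>carrier G. \<forall>w\<in>carrier G.
        s (x \<otimes>\<^bsub>G\<^esub> y) (z \<otimes>\<^bsub>G\<^esub> w) = (s x z) \<otimes>\<^bsub>G\<^esub> (s y w))"

end

theory Submission
  imports Defs
begin

text \<open>The interchange law alone forces \<open>x \<star> y = (x \<star> e) \<circ> (e \<star> y) = (e \<star> y) \<circ> (x \<star> e)\<close>.
  A left unit makes \<open>e \<star> y = y\<close>, and unipotency then gives \<open>(x \<star> e) \<circ> x = x \<star> x = e \<star> e = e\<close>,
  so \<open>x \<star> e = x\<inverse>\<close>. Hence \<open>x\<inverse> \<circ> y = y \<circ> x\<inverse>\<close> for all \<open>x, y\<close>, i.e. the group is abelian.\<close>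

locale group_with_partner = group G for G (structure) and s :: "'a \<Rightarrow> 'a \<Rightarrow> 'a" +
  assumes s_closed: "\<And>x y. x \<in> carrier G \<Longrightarrow> y \<in> carrier G \<Longrightarrow> s x y \<in> carrier G"
    and partners: "double_magma_partners G s"
begin

lemma interchange:
  "\<lbrakk>x \<in> carrier G; y \<in> carrier G; z \<in> carrier G; w \<in> carrier G\<rbrakk>
    \<Longrightarrow> s (x \<otimes> y) (z \<otimes> w) = s x z \<otimes> s y w"
  using partners unfolding double_magma_partners_def by blast

lemma s_one_one: "s \<one> \<one> = \<one>"
proof -
  have "s \<one> \<one> \<otimes> s \<one> \<one> = s \<one> \<one>"
    using interchange[of \<one> \<one> \<one> \<one>] by simp
  then show ?thesis
    using l_cancel_one'[of "s \<one> \<one>" "s \<one> \<one>"] s_closed by simp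
qed

lemma s_factor_left: "\<lbrakk>x \<in> carrier G; y \<in> carrier G\<rbrakk> \<Longrightarrow> s x y = s x \<one> \<otimes> s \<one> y"
  using interchange[of x \<one> \<one> y] by simp

lemma s_factor_right: "\<lbrakk>x \<in> carrier G; y \<in> carrier G\<rbrakk> \<Longrightarrow> s x y = s \<one> y \<otimes> s x \<one>"
  using interchange[of \<one> x y \<one>] by simp

lemma s_right_one_commute:
  "\<lbrakk>x \<in> carrier G; y \<in> carrier G\<rbrakk> \<Longrightarrow> s x \<one> \<otimes> s \<one> y = s \<one> y \<otimes> s x \<one>"
  using s_factor_left s_factor_right by metis

lemma s_one_left:
  assumes "is_left_unit (carrier G) s u" and "y \<in> carrier G"
  shows "s \<one> y = y"
proof -
  have u: "u \<in> carrier G" "\<And>x. x \<in> carrier G \<Longrightarrow> s u x = x"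
    using assms(1) unfolding is_left_unit_def by auto
  have "s u \<one> \<otimes> s \<one> y = y"
    using s_factor_left[OF u(1) assms(2)] u(2)[OF assms(2)] by simp
  then show ?thesis
    using u assms(2) s_closed by simp
qed

lemma s_one_right:
  assumes "unipotent (carrier G) s" and "is_left_unit (carrier G) s u" and "x \<in> carrier G"
  shows "s x \<one> = inv x"
proof -
  have "s x x = s \<one> \<one>"
    using assms(1,3) unfolding unipotent_def by blast
  then have "s x x = \<one>"
    using s_one_one by simp
  then have "s x \<one> \<otimes> x = \<one>"
    using s_factor_left[OF assms(3,3)] s_one_left[OF assms(2,3)] by simp
  then show ?thesis
    using inv_equality assms(3) s_closed by (metis one_closed)
qed

lemma s_eq_inv_mult:
  assumes "unipotent (carrier G) s" and "is_left_unit (carrier G) s u"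
    and "x \<in> carrier G" and "y \<in> carrier G"
  shows "s x y = inv x \<otimes> y"
  using s_factor_left[OF assms(3,4)] s_one_left[OF assms(2,4)] s_one_right[OF assms(1-3)]
  by simp

lemma comm_group_if_unipotent_left_unit:
  assumes "unipotent (carrier G) s" and "is_left_unit (carrier G) s u"
  shows "comm_group G"
proof (rule group_comm_groupI)
  fix x y
  assume x: "x \<in> carrier G" and y: "y \<in> carrier G"
  have "s (inv x) \<one> = x"
    using s_one_right[OF assms] x by simp
  then show "x \<otimes> y = y \<otimes> x"
    using s_right_one_commute[of "inv x" y] s_one_left[OF assms(2) y] x y by simp
qed

end

theorem theorem6p2:
  fixes G :: "('a, 'b) monoid_scheme" and s :: "'a \<Rightarrow> 'a \<Rightarrow> 'a" and u :: 'a
  assumes "group G"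
    and "\<forall>x\<in>carrier G. \<forall>y\<in>carrier G. s x y \<in> carrier G"
    and "right_modular (carrier G) s"
    and "unipotent (carrier G) s"
    and "is_left_unit (carrier G) s u"
    and "double_magma_partners G s"
  shows "comm_group G \<and> (\<forall>x\<in>carrier G. \<forall>y\<in>carrier G. s x y = inv\<^bsub>G\<^esub> x \<otimes>\<^bsub>G\<^esub> y)"
proof -
  interpret group_with_partner G s
    using assms(1,2,6) by (simp add: group_with_partner_def group_with_partner_axioms_def)
  show ?thesis
    using comm_group_if_unipotent_left_unit[OF assms(4,5)] s_eq_inv_mult[OF assms(4,5)] by blast
qed

end
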